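(* Every finite simple undirected graph is isomorphic to an induced subgraph of a finite simple undirected graph whose automorphism group acts primitively on its vertex set.
   Context: A permutation group is primitive if it is transitive and preserves no equivalence relation other than equality and the universal relation. *)

theory Defs
  imports Main
begin

definition simple_graph :: "'a set \<Rightarrow> ('a \<Rightarrow> 'a \<Rightarrow> bool) \<Rightarrow> bool" where
  "simple_graph V E \<longleftrightarrow> finite V \<and>
     (\<forall>x y. E x y \<longrightarrow> x \<in> V \<and> y \<in> V \<and> x \<noteq> y \<and> E y x)"

definition iso_induced_subgraph ::
  "'a set \<Rightarrow> ('a \<Rightarrow> 'a \<Rightarrow> bool) \<Rightarrow> 'b set \<Rightarrow> ('b \<Rightarrow> 'b \<Rightarrow> bool) \<Rightarrow> bool" where
  "iso_induced_subgraph V E W F \<longleftrightarrow>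
     (\<exists>f. inj_on f V \<and> f ` V \<subseteq> W \<and> (\<forall>x\<in>V. \<forall>y\<in>V. E x y \<longleftrightarrow> F (f x) (f y)))"

definition graph_aut :: "'b set \<Rightarrow> ('b \<Rightarrow> 'b \<Rightarrow> bool) \<Rightarrow> ('b \<Rightarrow> 'b) set" where
  "graph_aut W F = {\<sigma>. bij_betw \<sigma> W W \<and> (\<forall>x\<in>W. \<forall>y\<in>W. F x y \<longleftrightarrow> F (\<sigma> x) (\<sigma> y))}"

definition primitive_on :: "('b \<Rightarrow> 'b) set \<Rightarrow> 'b set \<Rightarrow> bool" where
  "primitive_on G W \<longleftrightarrow>
     W \<noteq> {} \<and> (\<forall>x\<in>W. \<forall>y\<in>W. \<exists>\<sigma>\<in>G. \<sigma> x = y) \<and>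
     (\<forall>R. equiv W R \<and> (\<forall>\<sigma>\<in>G. \<forall>(x, y)\<in>R. (\<sigma> x, \<sigma> y) \<in> R)
          \<longrightarrow> R = Id_on W \<or> R = W \<times> W)"

end

theory Submission
  imports Defs "HOL-Number_Theory.Cong"
begin

text \<open>Take a prime \<open>p > 2^n\<close> with \<open>n = |V|\<close>, label the vertices by distinct powers of two
  \<open>a v\<close>, and form the Cayley graph of \<open>\<int>/p\<close> with connection set \<open>{a w - a v | vw an edge}\<close>.
  Translations of \<open>\<int>/p\<close> are automorphisms, and a set of permutations containing them is
  primitive because \<open>p\<close> is prime: an invariant equivalence relation relating two distinct
  points relates every point to all its translates by multiples of a unit, hence to everything.
  The labels span an induced copy of the graph because powers of two form a Sidon set and all
  sums \<open>a v + a w\<close> stay below \<open>p\<close>, so \<open>a w - a v \<equiv> a w' - a v' (mod p)\<close> with \<open>a v \<noteq> a w\<close>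
  forces \<open>v = v'\<close> and \<open>w = w'\<close>.\<close>

definition sidon_set :: "nat set \<Rightarrow> bool" where
  "sidon_set A \<longleftrightarrow> (\<forall>a\<in>A. \<forall>b\<in>A. \<forall>c\<in>A. \<forall>d\<in>A. a + b = c + d \<longrightarrow> {a, b} = {c, d})"

lemma bit_sum_of_distinct_powers_of_two:
  assumes "a \<noteq> b"
  shows "bit ((2::nat) ^ a + 2 ^ b) n \<longleftrightarrow> n = a \<or> n = b"
  using assms by (subst bit_disjunctive_add_iff) (auto simp: bit_exp_iff)

lemma double_power_of_two_ne_sum_of_distinct:
  assumes "c \<noteq> d"
  shows "(2::nat) ^ a + 2 ^ a \<noteq> 2 ^ c + 2 ^ d"
proof
  assume "(2::nat) ^ a + 2 ^ a = 2 ^ c + 2 ^ d"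
  then have "(2::nat) ^ Suc a = 2 ^ c + 2 ^ d" by simp
  then have "bit ((2::nat) ^ Suc a) n \<longleftrightarrow> n = c \<or> n = d" for n
    using bit_sum_of_distinct_powers_of_two[OF assms] by presburger
  then show False using assms by (metis bit_exp_iff)
qed

lemma powers_of_two_sum_eq_imp:
  assumes "(2::nat) ^ a + 2 ^ b = 2 ^ c + 2 ^ d"
  shows "{a, b} = {c, d}"
proof (cases "a = b"; cases "c = d")
  assume "a = b" "c = d"
  with assms have "(2::nat) ^ a + 2 ^ a = 2 ^ c + 2 ^ c" by simp
  then have "(2::nat) ^ a = 2 ^ c" by linarith
  with \<open>a = b\<close> \<open>c = d\<close> show ?thesis by simp
next
  assume "a \<noteq> b" "c \<noteq> d"
  then have "n = a \<or> n = b \<longleftrightarrow> n = c \<or> n = d" for n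
    using assms bit_sum_of_distinct_powers_of_two by metis
  then show ?thesis by blast
qed (use assms double_power_of_two_ne_sum_of_distinct in metis)+

lemma sidon_set_powers_of_two: "sidon_set ((\<lambda>k. (2::nat) ^ k) ` S)"
proof -
  have "{(2::nat) ^ a, 2 ^ b} = {2 ^ c, 2 ^ d}" if "(2::nat) ^ a + 2 ^ b = 2 ^ c + 2 ^ d" for a b c d
    using powers_of_two_sum_eq_imp[OF that] image_insert image_empty
    by (metis (no_types, lifting))
  then show ?thesis
    unfolding sidon_set_def by blast
qed

definition translate_mod :: "nat \<Rightarrow> nat \<Rightarrow> nat \<Rightarrow> nat" where
  "translate_mod p c x = (x + c) mod p"

lemma translate_mod_less: "0 < p \<Longrightarrow> translate_mod p c x < p"
  by (simp add: translate_mod_def)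

lemma translate_mod_eq_iff:
  "translate_mod p c x = translate_mod p c y \<longleftrightarrow> [x = y] (mod p)"
  using cong_add_rcancel_nat[of x c y p] by (simp add: translate_mod_def cong_def)

lemma bij_betw_translate_mod:
  assumes "0 < p"
  shows "bij_betw (translate_mod p c) {0..<p} {0..<p}"
proof -
  have "inj_on (translate_mod p c) {0..<p}"
    by (rule inj_onI) (auto simp: translate_mod_eq_iff intro: cong_less_modulus_unique_nat)
  moreover have "translate_mod p c ` {0..<p} \<subseteq> {0..<p}"
    using assms by (auto simp: translate_mod_less)
  ultimately show ?thesis by (simp add: bij_betw_def endo_inj_surj)
qed

lemma exists_cong_add_mult:
  fixes d p u v :: nat
  assumes "coprime d p" "u \<le> v"
  shows "\<exists>k. [u + k * d = v] (mod p)"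
proof -
  obtain e where e: "[d * e = 1] (mod p)"
    using cong_solve_coprime_nat[OF assms(1)] by auto
  have "[u + e * (v - u) * d = u + (d * e) * (v - u)] (mod p)"
    by (simp add: ac_simps)
  also have "[u + (d * e) * (v - u) = u + 1 * (v - u)] (mod p)"
    by (intro cong_add cong_mult e cong_refl)
  also have "u + 1 * (v - u) = v"
    using assms(2) by simp
  finally show ?thesis ..
qed

lemma trans_step_mod_imp_multiples:
  fixes p d z k :: nat
  assumes "trans R" "(z, z) \<in> R" and step: "\<And>w. w < p \<Longrightarrow> (w, (w + d) mod p) \<in> R"
    and "0 < p" "z < p"
  shows "(z, (z + k * d) mod p) \<in> R"
proof (induction k)
  case 0
  show ?case
    using \<open>(z, z) \<in> R\<close> \<open>z < p\<close> by simp
next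
  case (Suc k)
  have "((z + k * d) mod p, ((z + k * d) mod p + d) mod p) \<in> R"
    using step[OF mod_less_divisor[OF \<open>0 < p\<close>]] .
  moreover have "((z + k * d) mod p + d) mod p = (z + Suc k * d) mod p"
    by (simp add: mod_add_left_eq mod_add_right_eq ac_simps)
  ultimately show ?case
    using transD[OF \<open>trans R\<close> Suc] by simp
qed

lemma translation_invariant_equiv_eq_univ:
  assumes "prime p" and equiv: "equiv {0..<p} R"
    and invariant: "\<And>c x y. (x, y) \<in> R \<Longrightarrow> (translate_mod p c x, translate_mod p c y) \<in> R"
    and "(x, y) \<in> R" "x \<noteq> y"
  shows "R = {0..<p} \<times> {0..<p}"
proof -
  have R_sub: "R \<subseteq> {0..<p} \<times> {0..<p}" and refl: "\<And>z. z < p \<Longrightarrow> (z, z) \<in> R"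
    using equiv by (auto simp: equiv_def refl_on_def)
  have "trans R"
    using equiv by (simp add: equiv_def)
  have xy: "x < p" "y < p"
    using R_sub \<open>(x, y) \<in> R\<close> by auto
  define d where "d = (y + p - x) mod p"
  have step: "(w, (w + d) mod p) \<in> R" if "w < p" for w
  proof -
    have "translate_mod p (w + p - x) x = w" "translate_mod p (w + p - x) y = (w + d) mod p"
      using that xy by (simp_all add: translate_mod_def d_def mod_add_right_eq ac_simps)
    then show ?thesis
      using invariant[OF \<open>(x, y) \<in> R\<close>] by metis
  qed
  have multiples: "(z, (z + k * d) mod p) \<in> R" if "z < p" for z k
    using trans_step_mod_imp_multiples[OF \<open>trans R\<close> refl[OF that] step _ that] that by simp
  have "0 < d" "d < p"
    using xy \<open>x \<noteq> y\<close> by (auto simp: d_def mod_if)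
  then have "\<not> p dvd d"
    by (auto dest: nat_dvd_not_less)
  then have "coprime d p"
    using \<open>prime p\<close> prime_imp_coprime coprime_commute by blast
  have "(u, v) \<in> R" if "u < p" "v < p" for u v
  proof -
    have "u \<le> v + p"
      using that by simp
    then obtain k where "[u + k * d = v + p] (mod p)"
      using exists_cong_add_mult[OF \<open>coprime d p\<close>] by blast
    then have "(u + k * d) mod p = v"
      using that by (simp add: cong_def)
    then show ?thesis
      using multiples[OF \<open>u < p\<close>, of k] by simp
  qed
  then show ?thesis
    using R_sub by auto
qed

lemma primitive_on_if_translates:
  assumes "prime p" and translates: "\<And>c. translate_mod p c \<in> G"
  shows "primitive_on G {0..<p}"
  unfolding primitive_on_def
proof (intro conjI ballI allI impI)
  have "0 < p"
    using \<open>prime p\<close> prime_gt_0_nat by blast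
  then show "{0..<p} \<noteq> {}"
    by simp
  fix x y :: nat
  assume "x \<in> {0..<p}" "y \<in> {0..<p}"
  then have "translate_mod p (y + p - x) x = y"
    by (simp add: translate_mod_def)
  then show "\<exists>\<sigma>\<in>G. \<sigma> x = y"
    using translates by blast
next
  fix R
  assume "equiv {0..<p} R \<and> (\<forall>\<sigma>\<in>G. \<forall>(x, y)\<in>R. (\<sigma> x, \<sigma> y) \<in> R)"
  then have equiv: "equiv {0..<p} R"
    and invariant: "\<And>c x y. (x, y) \<in> R \<Longrightarrow> (translate_mod p c x, translate_mod p c y) \<in> R"
    using translates by auto
  show "R = Id_on {0..<p} \<or> R = {0..<p} \<times> {0..<p}"
  proof (cases "R \<subseteq> Id")
    case True
    with equiv show ?thesis
      by (auto simp: equiv_def refl_on_def)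
  next
    case False
    then obtain x y where "(x, y) \<in> R" "x \<noteq> y"
      by auto
    then show ?thesis
      using translation_invariant_equiv_eq_univ[OF \<open>prime p\<close> equiv invariant] by blast
  qed
qed

text \<open>The Cayley graph of \<open>\<int>/p\<close> with connection set \<open>{t - s | (s, t) \<in> D}\<close>; differences are
  given as pairs so that no truncated subtraction occurs.\<close>
definition cayley_graph_mod :: "nat \<Rightarrow> (nat \<times> nat) set \<Rightarrow> nat \<Rightarrow> nat \<Rightarrow> bool" where
  "cayley_graph_mod p D x y \<longleftrightarrow>
     x < p \<and> y < p \<and> x \<noteq> y \<and> (\<exists>(s, t)\<in>D. (x + t) mod p = (y + s) mod p)"

lemma simple_graph_cayley_graph_mod:
  assumes "\<And>s t. (s, t) \<in> D \<Longrightarrow> (t, s) \<in> D"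
  shows "simple_graph {0..<p} (cayley_graph_mod p D)"
  unfolding simple_graph_def cayley_graph_mod_def using assms by force

lemma cayley_graph_mod_translate_iff:
  "cayley_graph_mod p D (translate_mod p c x) (translate_mod p c y) \<longleftrightarrow> cayley_graph_mod p D x y"
  if "x < p" "y < p"
proof -
  have "(translate_mod p c x + t) mod p = (translate_mod p c y + s) mod p \<longleftrightarrow>
        (x + t) mod p = (y + s) mod p" for s t
    using translate_mod_eq_iff[of p c "x + t" "y + s"]
    by (simp add: translate_mod_def mod_add_left_eq mod_add_right_eq ac_simps cong_def)
  moreover have "translate_mod p c x \<noteq> translate_mod p c y \<longleftrightarrow> x \<noteq> y"
    using that by (auto simp: translate_mod_eq_iff intro: cong_less_modulus_unique_nat)
  ultimately show ?thesis
    using that by (simp add: cayley_graph_mod_def translate_mod_less)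
qed

lemma translate_mod_in_graph_aut:
  "0 < p \<Longrightarrow> translate_mod p c \<in> graph_aut {0..<p} (cayley_graph_mod p D)"
  by (simp add: graph_aut_def bij_betw_translate_mod cayley_graph_mod_translate_iff)

lemma iso_induced_subgraph_cayley_graph_mod:
  assumes "simple_graph V E" "inj_on a V" "sidon_set (a ` V)" "\<And>i. i \<in> V \<Longrightarrow> 2 * a i < p"
  shows "iso_induced_subgraph V E {0..<p} (cayley_graph_mod p {(a i, a j) | i j. E i j})"
  unfolding iso_induced_subgraph_def
proof (intro exI conjI ballI)
  let ?F = "cayley_graph_mod p {(a i, a j) | i j. E i j}"
  have edges: "E i j \<Longrightarrow> i \<in> V \<and> j \<in> V \<and> i \<noteq> j" for i j
    using assms(1) by (auto simp: simple_graph_def)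
  show "inj_on a V" by fact
  show "a ` V \<subseteq> {0..<p}"
    using assms(4) by fastforce
  fix i j
  assume "i \<in> V" "j \<in> V"
  show "E i j \<longleftrightarrow> ?F (a i) (a j)"
  proof
    assume "E i j"
    then show "?F (a i) (a j)"
      using edges[OF \<open>E i j\<close>] assms(2,4) \<open>i \<in> V\<close> \<open>j \<in> V\<close>
      by (force simp: cayley_graph_mod_def inj_on_eq_iff add.commute)
  next
    assume "?F (a i) (a j)"
    then obtain i' j' where "E i' j'" "a i \<noteq> a j"
      and cong: "(a i + a j') mod p = (a j + a i') mod p"
      by (auto simp: cayley_graph_mod_def)
    then have "i' \<in> V" "j' \<in> V"
      using edges by blast+
    have "2 * a i < p" "2 * a j < p" "2 * a i' < p" "2 * a j' < p"
      using assms(4) \<open>i \<in> V\<close> \<open>j \<in> V\<close> \<open>i' \<in> V\<close> \<open>j' \<in> V\<close> by blast+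
    then have "a i + a j' < p" "a j + a i' < p"
      by linarith+
    with cong have "a i + a j' = a j + a i'"
      by simp
    then have "{a i, a j'} = {a j, a i'}"
      using assms(3) \<open>i \<in> V\<close> \<open>j \<in> V\<close> \<open>i' \<in> V\<close> \<open>j' \<in> V\<close> unfolding sidon_set_def by blast
    with \<open>a i \<noteq> a j\<close> have "a i = a i'" "a j = a j'"
      by (auto simp: doubleton_eq_iff)
    then have "i = i'" "j = j'"
      using assms(2) \<open>i \<in> V\<close> \<open>j \<in> V\<close> \<open>i' \<in> V\<close> \<open>j' \<in> V\<close> by (auto dest: inj_onD)
    with \<open>E i' j'\<close> show "E i j"
      by simp
  qed
qed

lemma obtain_sidon_labelling:
  assumes "finite V"
  obtains a :: "'a \<Rightarrow> nat"
  where "inj_on a V" "sidon_set (a ` V)" "\<And>i. i \<in> V \<Longrightarrow> 2 * a i \<le> 2 ^ card V"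
proof -
  obtain h where h: "bij_betw h V {0..<card V}"
    using assms ex_bij_betw_finite_nat by blast
  show thesis
  proof (rule that)
    show "inj_on (\<lambda>i. (2::nat) ^ h i) V"
      using h by (auto simp: bij_betw_def inj_on_def)
    show "sidon_set ((\<lambda>i. 2 ^ h i) ` V)"
      using sidon_set_powers_of_two[of "h ` V"] by (simp add: image_image)
    fix i
    assume "i \<in> V"
    then have "h i < card V"
      using h by (auto dest: bij_betwE)
    then show "2 * 2 ^ h i \<le> (2::nat) ^ card V"
      by (metis power_Suc Suc_leI power_increasing one_le_numeral)
  qed
qed

theorem proposition9:
  fixes V :: "'a set" and E :: "'a \<Rightarrow> 'a \<Rightarrow> bool"
  assumes "simple_graph V E"
  shows "\<exists>(W :: nat set) F. simple_graph W F \<and> primitive_on (graph_aut W F) W \<and>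
           iso_induced_subgraph V E W F"
proof -
  obtain a where a: "inj_on a V" "sidon_set (a ` V)" "\<And>i. i \<in> V \<Longrightarrow> 2 * a i \<le> 2 ^ card V"
    using assms obtain_sidon_labelling unfolding simple_graph_def by blast
  obtain p :: nat where "prime p" "2 ^ card V < p"
    using bigger_prime by blast
  define D where "D = {(a i, a j) | i j. E i j}"
  have "simple_graph {0..<p} (cayley_graph_mod p D)"
    using assms by (intro simple_graph_cayley_graph_mod) (auto simp: D_def simple_graph_def)
  moreover have "primitive_on (graph_aut {0..<p} (cayley_graph_mod p D)) {0..<p}"
    using \<open>prime p\<close> prime_gt_0_nat by (intro primitive_on_if_translates translate_mod_in_graph_aut) auto
  moreover have "iso_induced_subgraph V E {0..<p} (cayley_graph_mod p D)"
    unfolding D_def using assms a \<open>2 ^ card V < p\<close>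
    by (intro iso_induced_subgraph_cayley_graph_mod) (auto intro: le_less_trans)
  ultimately show ?thesis
    by blast
qed

end
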